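(* Let $t(0)t(1)t(2)\cdots$ be the Thue–Morse sequence, and define $f:\mathbb{N}\times\mathbb{N}\to\{0,1\}$ by $f(i,j)=t(i+j)$. Then $f$ is frameless: there do not exist $m,n\ge0$ and $p,q\ge1$ such that $f(m,n+i)=f(m+p,n+i)$ for all $0\le i\le q$ and $f(m+j,n)=f(m+j,n+q)$ for all $0\le j\le p$.
   Context: $\mathbb{N}=\{0,1,2,\dots\}$. The Thue–Morse sequence is defined by $t(n)=$ the number of $1$ bits in the binary representation of $n$, taken modulo $2$ (so it begins $0110100110010110\cdots$). A picture frame in a coloring $f$ of $\mathbb{N}\times\mathbb{N}$ is a rectangular block $\{m,\dots,m+p\}\times\{n,\dots,n+q\}$ with $p,q\ge1$ whose first and last rows agree and whose first and last columns agree; $f$ is frameless if it has no picture frame. *)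

theory Defs
  imports Main
begin

fun ones :: "nat \<Rightarrow> nat" where
  "ones n = (if n = 0 then 0 else n mod 2 + ones (n div 2))"

declare ones.simps[simp del]

definition thue_morse :: "nat \<Rightarrow> nat" where
  "thue_morse n = ones n mod 2"

definition has_picture_frame :: "(nat \<Rightarrow> nat \<Rightarrow> 'a) \<Rightarrow> bool" where
  "has_picture_frame f \<longleftrightarrow>
     (\<exists>m n p q. p \<ge> 1 \<and> q \<ge> 1 \<and>
        (\<forall>i\<le>q. f m (n + i) = f (m + p) (n + i)) \<and>
        (\<forall>j\<le>p. f (m + j) n = f (m + j) (n + q)))"

definition frameless :: "(nat \<Rightarrow> nat \<Rightarrow> 'a) \<Rightarrow> bool" where
  "frameless f \<longleftrightarrow> \<not> has_picture_frame f"

end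

theory Submission
  imports Defs
begin

text \<open>
  Since f(i,j) depends only on i + j, a picture frame with sides p and q forces the
  factor of the Thue--Morse word starting at m + n to have period min p q on a window of
  length 2 min p q + 1, i.e. an overlap. The Thue--Morse word is overlap-free: an overlap
  of even period 2r descends, via t(2n) = t(n) and t(2n+1) = 1 - t(n), to an overlap of
  period r; an overlap of odd period p makes the word alternate on p consecutive steps
  (one of y, y + p is even and t(2k) \<noteq> t(2k+1)), so t(a+p) \<noteq> t(a), contradicting
  the period.
\<close>

definition overlap_at :: "(nat \<Rightarrow> 'a) \<Rightarrow> nat \<Rightarrow> nat \<Rightarrow> bool" where
  "overlap_at w a p \<longleftrightarrow> 0 < p \<and> (\<forall>i\<le>p. w (a + i) = w (a + p + i))"

lemma thue_morse_rec: "thue_morse n = (n + thue_morse (n div 2)) mod 2"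
proof (cases "n = 0")
  case False
  then show ?thesis
    unfolding thue_morse_def by (subst ones.simps) (simp add: mod_add_left_eq mod_add_right_eq)
qed (simp add: thue_morse_def ones.simps)

lemma thue_morse_le_1: "thue_morse n \<le> 1"
  unfolding thue_morse_def by simp

lemma thue_morse_Suc_neq_if_even:
  assumes "even x"
  shows "thue_morse (Suc x) \<noteq> thue_morse x"
proof -
  have "Suc x div 2 = x div 2" using assms by presburger
  then show ?thesis using thue_morse_rec[of x] thue_morse_rec[of "Suc x"] by presburger
qed

lemma thue_morse_eq_half:
  assumes "x mod 2 = y mod 2" and "thue_morse x = thue_morse y"
  shows "thue_morse (x div 2) = thue_morse (y div 2)"
  using assms thue_morse_rec[of x] thue_morse_rec[of y]
    thue_morse_le_1[of "x div 2"] thue_morse_le_1[of "y div 2"] by presburger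

lemma alternating_binary_eq_mod_2:
  fixes w :: "nat \<Rightarrow> nat"
  assumes "\<And>x. w x \<le> 1" and "\<And>j. j < p \<Longrightarrow> w (a + Suc j) \<noteq> w (a + j)"
  shows "w (a + p) = (w a + p) mod 2"
  using assms(2)
proof (induction p)
  case (Suc p)
  have "w (a + p) = (w a + p) mod 2" using Suc.IH Suc.prems by simp
  moreover have "w (a + Suc p) \<noteq> w (a + p)" using Suc.prems[of p] by blast
  ultimately show ?case using assms(1)[of "a + p"] assms(1)[of "a + Suc p"] by presburger
qed (use assms(1)[of a] in \<open>simp add: mod_less\<close>)

lemma overlap_at_thue_morse_half:
  assumes "overlap_at thue_morse a (2 * r)"
  shows "overlap_at thue_morse (a div 2) r"
  unfolding overlap_at_def
proof (intro conjI allI impI)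
  show "0 < r" using assms by (simp add: overlap_at_def)
  fix i assume "i \<le> r"
  then have "thue_morse (a + 2 * i) = thue_morse (a + 2 * r + 2 * i)"
    using assms by (simp add: overlap_at_def)
  moreover have "(a + 2 * i) mod 2 = (a + 2 * r + 2 * i) mod 2" by presburger
  ultimately have "thue_morse ((a + 2 * i) div 2) = thue_morse ((a + 2 * r + 2 * i) div 2)"
    using thue_morse_eq_half by blast
  moreover have "(a + 2 * i) div 2 = a div 2 + i" and "(a + 2 * r + 2 * i) div 2 = a div 2 + r + i"
    by simp_all
  ultimately show "thue_morse (a div 2 + i) = thue_morse (a div 2 + r + i)" by simp
qed

lemma overlap_at_thue_morse_odd_alternates:
  assumes overlap: "overlap_at thue_morse a p" and "odd p" and "j < p"
  shows "thue_morse (a + Suc j) \<noteq> thue_morse (a + j)"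
proof -
  have shift: "thue_morse (a + p + i) = thue_morse (a + i)" if "i \<le> p" for i
    using overlap that by (simp add: overlap_at_def)
  consider "even (a + j)" | "even (a + p + j)" using \<open>odd p\<close> by (cases "even (a + j)") auto
  then show ?thesis
  proof cases
    case 1
    then show ?thesis using thue_morse_Suc_neq_if_even by simp
  next
    case 2
    then have "thue_morse (a + p + Suc j) \<noteq> thue_morse (a + p + j)"
      using thue_morse_Suc_neq_if_even by simp
    then show ?thesis using shift[of j] shift[of "Suc j"] \<open>j < p\<close> by simp
  qed
qed

theorem thue_morse_overlap_free: "\<not> overlap_at thue_morse a p"
proof (induction p arbitrary: a rule: less_induct)
  case (less p)
  show ?case
  proof
    assume overlap: "overlap_at thue_morse a p"
    show False
    proof (cases "even p")
      case True
      then obtain r where "p = 2 * r" by blast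
      moreover have "r < p" using overlap \<open>p = 2 * r\<close> by (simp add: overlap_at_def)
      ultimately show False using less.IH overlap_at_thue_morse_half overlap by blast
    next
      case False
      have "thue_morse (a + p) = (thue_morse a + p) mod 2"
        by (intro alternating_binary_eq_mod_2 thue_morse_le_1
            overlap_at_thue_morse_odd_alternates[OF overlap False])
      moreover have "thue_morse (a + p) = thue_morse a"
        using overlap unfolding overlap_at_def by (metis add.right_neutral le0)
      ultimately show False using False by presburger
    qed
  qed
qed

lemma picture_frame_of_sum_imp_overlap:
  assumes "has_picture_frame (\<lambda>i j. w (i + j))"
  shows "\<exists>a p. overlap_at w a p"
proof -
  obtain m n p q where "p \<ge> 1" "q \<ge> 1"
    and rows: "\<forall>i\<le>q. w (m + (n + i)) = w (m + p + (n + i))"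
    and cols: "\<forall>j\<le>p. w (m + j + n) = w (m + j + (n + q))"
    using assms unfolding has_picture_frame_def by blast
  show ?thesis
  proof (cases "p \<le> q")
    case True
    with rows \<open>p \<ge> 1\<close> have "overlap_at w (m + n) p"
      by (auto simp: overlap_at_def ac_simps)
    then show ?thesis by blast
  next
    case False
    with cols \<open>q \<ge> 1\<close> have "overlap_at w (m + n) q"
      by (auto simp: overlap_at_def ac_simps)
    then show ?thesis by blast
  qed
qed

theorem theorem3:
  shows "frameless (\<lambda>i j. thue_morse (i + j))"
  unfolding frameless_def
  using picture_frame_of_sum_imp_overlap thue_morse_overlap_free by blast

end
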